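(* Let $L$ be the $S$-glued sum of an $S$-glued system $(L_x)_{x\in S}$, let $L'$ be a lattice (join $+$, meet $\cdot$), and let $\varphi_x:L_x\to L'$ ($x\in S$) be lattice homomorphisms such that $\varphi_x$ and $\varphi_y$ agree on $L_x\cap L_y$ whenever $x\prec y$ in $S$. Assume that either $S$ is modular, or for all $x,y\in S$: $\varphi_x(0_x)+\varphi_y(0_y)=\varphi_{x\vee y}(0_{x\vee y})$ and $\varphi_x(1_x)\cdot\varphi_y(1_y)=\varphi_{x\wedge y}(1_{x\wedge y})$. Then $\varphi:=\bigcup_{x\in S}\varphi_x$ is a well-defined map $L\to L'$ and is a lattice homomorphism; if every $\varphi_x$ is injective, then $\varphi$ is injective.
   Context: Let $S$ be a lattice of finite length (every chain in $S$ is finite), with order $\le$, join $\vee$ and meet $\wedge$; $x\prec y$ means that $y$ covers $x$. An \emph{$S$-glued system} is a family $(L_x,\le_x)_{x\in S}$ of lattices of finite length (with join $+_x$, meet $\cdot_x$, least element $0_x$, greatest element $1_x$), whose underlying sets may overlap, such that for all $x,y\in S$: (1) if $x\le y$ and $L_x\cap L_y\ne\emptyset$, then $L_x\cap L_y$ is a filter of $L_x$ and an ideal of $L_y$; (2) in the situation of (1), for all $a,b\in L_x\cap L_y$: $a\le_x b$ iff $a\le_y b$; (3) if $x\prec y$ then $L_x\cap L_y\ne\emptyset$; (4) $L_x\cap L_y\subseteq L_{x\wedge y}\cap L_{x\vee y}$. The \emph{$S$-glued sum} of the system is the set $L=\bigcup_{x\in S}L_x$ equipped with the relation $\le$ defined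 as the transitive closure of $\bigcup_{x\in S}\le_x$; it is a lattice. *)

theory Defs
  imports Main
begin

text \<open>Lattices given as a carrier set A with an order relation le (only meaningful on A).\<close>

definition is_join :: "'a set \<Rightarrow> ('a \<Rightarrow> 'a \<Rightarrow> bool) \<Rightarrow> 'a \<Rightarrow> 'a \<Rightarrow> 'a \<Rightarrow> bool" where
  "is_join A le a b c \<longleftrightarrow> c \<in> A \<and> le a c \<and> le b c \<and> (\<forall>d\<in>A. le a d \<and> le b d \<longrightarrow> le c d)"

definition is_meet :: "'a set \<Rightarrow> ('a \<Rightarrow> 'a \<Rightarrow> bool) \<Rightarrow> 'a \<Rightarrow> 'a \<Rightarrow> 'a \<Rightarrow> bool" where
  "is_meet A le a b c \<longleftrightarrow> c \<in> A \<and> le c a \<and> le c b \<and> (\<forall>d\<in>A. le d a \<and> le d b \<longrightarrow> le d c)"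

definition ljoin :: "'a set \<Rightarrow> ('a \<Rightarrow> 'a \<Rightarrow> bool) \<Rightarrow> 'a \<Rightarrow> 'a \<Rightarrow> 'a" where
  "ljoin A le a b = (THE c. is_join A le a b c)"

definition lmeet :: "'a set \<Rightarrow> ('a \<Rightarrow> 'a \<Rightarrow> bool) \<Rightarrow> 'a \<Rightarrow> 'a \<Rightarrow> 'a" where
  "lmeet A le a b = (THE c. is_meet A le a b c)"

definition is_lattice :: "'a set \<Rightarrow> ('a \<Rightarrow> 'a \<Rightarrow> bool) \<Rightarrow> bool" where
  "is_lattice A le \<longleftrightarrow>
     (\<forall>a\<in>A. le a a) \<and>
     (\<forall>a\<in>A. \<forall>b\<in>A. le a b \<and> le b a \<longrightarrow> a = b) \<and>
     (\<forall>a\<in>A. \<forall>b\<in>A. \<forall>c\<in>A. le a b \<and> le b c \<longrightarrow> le a c) \<and>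
     (\<forall>a\<in>A. \<forall>b\<in>A. (\<exists>c. is_join A le a b c) \<and> (\<exists>c. is_meet A le a b c))"

definition fin_length_lattice :: "'a set \<Rightarrow> ('a \<Rightarrow> 'a \<Rightarrow> bool) \<Rightarrow> bool" where
  "fin_length_lattice A le \<longleftrightarrow> is_lattice A le \<and> A \<noteq> {} \<and>
     (\<forall>C. C \<subseteq> A \<and> Complete_Partial_Order.chain le C \<longrightarrow> finite C)"

definition lbot :: "'a set \<Rightarrow> ('a \<Rightarrow> 'a \<Rightarrow> bool) \<Rightarrow> 'a" where
  "lbot A le = (THE a. a \<in> A \<and> (\<forall>b\<in>A. le a b))"

definition ltop :: "'a set \<Rightarrow> ('a \<Rightarrow> 'a \<Rightarrow> bool) \<Rightarrow> 'a" where
  "ltop A le = (THE a. a \<in> A \<and> (\<forall>b\<in>A. le b a))"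

definition is_filter :: "'a set \<Rightarrow> ('a \<Rightarrow> 'a \<Rightarrow> bool) \<Rightarrow> 'a set \<Rightarrow> bool" where
  "is_filter A le F \<longleftrightarrow> F \<subseteq> A \<and> F \<noteq> {} \<and>
     (\<forall>a\<in>F. \<forall>b\<in>A. le a b \<longrightarrow> b \<in> F) \<and> (\<forall>a\<in>F. \<forall>b\<in>F. lmeet A le a b \<in> F)"

definition is_ideal :: "'a set \<Rightarrow> ('a \<Rightarrow> 'a \<Rightarrow> bool) \<Rightarrow> 'a set \<Rightarrow> bool" where
  "is_ideal A le I \<longleftrightarrow> I \<subseteq> A \<and> I \<noteq> {} \<and>
     (\<forall>a\<in>I. \<forall>b\<in>A. le b a \<longrightarrow> b \<in> I) \<and> (\<forall>a\<in>I. \<forall>b\<in>I. ljoin A le a b \<in> I)"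

definition lattice_hom :: "'a set \<Rightarrow> ('a \<Rightarrow> 'a \<Rightarrow> bool) \<Rightarrow> ('a \<Rightarrow> 'b::lattice) \<Rightarrow> bool" where
  "lattice_hom A le f \<longleftrightarrow> (\<forall>a\<in>A. \<forall>b\<in>A.
     f (ljoin A le a b) = sup (f a) (f b) \<and> f (lmeet A le a b) = inf (f a) (f b))"

definition covers :: "'i::order \<Rightarrow> 'i \<Rightarrow> bool" (infix "\<prec>" 50) where
  "x \<prec> y \<longleftrightarrow> x < y \<and> \<not> (\<exists>z. x < z \<and> z < y)"

definition fin_length_type :: "'i::order itself \<Rightarrow> bool" where
  "fin_length_type _ \<longleftrightarrow> (\<forall>C::'i set. Complete_Partial_Order.chain (\<le>) C \<longrightarrow> finite C)"

definition modular_lattice :: "'i::lattice itself \<Rightarrow> bool" where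
  "modular_lattice _ \<longleftrightarrow> (\<forall>x y z::'i. x \<le> z \<longrightarrow> sup x (inf y z) = inf (sup x y) z)"

definition glued_system :: "('i::lattice \<Rightarrow> 'a set) \<Rightarrow> ('i \<Rightarrow> 'a \<Rightarrow> 'a \<Rightarrow> bool) \<Rightarrow> bool" where
  "glued_system L le \<longleftrightarrow>
     (\<forall>x. fin_length_lattice (L x) (le x)) \<and>
     (\<forall>x y. x \<le> y \<and> L x \<inter> L y \<noteq> {} \<longrightarrow>
        is_filter (L x) (le x) (L x \<inter> L y) \<and> is_ideal (L y) (le y) (L x \<inter> L y)) \<and>
     (\<forall>x y. x \<le> y \<and> L x \<inter> L y \<noteq> {} \<longrightarrow>
        (\<forall>a\<in>L x \<inter> L y. \<forall>b\<in>L x \<inter> L y. le x a b \<longleftrightarrow> le y a b)) \<and>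
     (\<forall>x y. x \<prec> y \<longrightarrow> L x \<inter> L y \<noteq> {}) \<and>
     (\<forall>x y. L x \<inter> L y \<subseteq> L (inf x y) \<inter> L (sup x y))"

definition glued_carrier :: "('i \<Rightarrow> 'a set) \<Rightarrow> 'a set" where
  "glued_carrier L = (\<Union>x. L x)"

definition glued_le :: "('i \<Rightarrow> 'a set) \<Rightarrow> ('i \<Rightarrow> 'a \<Rightarrow> 'a \<Rightarrow> bool) \<Rightarrow> 'a \<Rightarrow> 'a \<Rightarrow> bool" where
  "glued_le L le = (\<lambda>a b. \<exists>x. a \<in> L x \<and> b \<in> L x \<and> le x a b)\<^sup>+\<^sup>+"

end

theory Submission
  imports Defs "HOL-Library.Dual_Ordered_Lattice"
begin

text \<open>Every element \<open>a\<close> of the glued sum lies in a least component \<open>L (index a)\<close>.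
  For \<open>x \<le> w\<close>, an element \<open>a \<in> L x\<close> has a canonical image in \<open>L w\<close>: join it with the
  bottoms of the components along any chain of covers from \<open>x\<close> to \<open>w\<close>; the result does not
  depend on the chain because two covers of \<open>x\<close> are reconciled inside their join. The glued
  order compares \<open>a\<close> with \<open>c\<close> by lifting \<open>a\<close> to \<open>L (index c)\<close>, so the join of \<open>a\<close> and
  \<open>b\<close> is computed inside \<open>L (index a \<squnion> index b)\<close>. The maps \<open>\<phi> x\<close> agree on all overlaps,
  and \<open>f a = \<phi> (index a) a\<close> sends a lifted element to \<open>\<phi> a \<squnion> \<phi>(0\<^sub>w)\<close>; hence \<open>f\<close>
  preserves joins as soon as \<open>\<phi>(0\<^bsub>x \<squnion> y\<^esub>) \<le> \<phi>(0\<^sub>x) \<squnion> \<phi>(0\<^sub>y)\<close>. This inequality is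
  either assumed or, for modular \<open>S\<close>, obtained by induction over covering squares. Meets
  are joins of the glued sum of the order-dual system. If every \<open>\<phi> x\<close> is injective, then
  \<open>f a = f b\<close> forces \<open>a = a \<squnion> b = b\<close>, because \<open>f\<close> is monotone and injective along the
  steps that generate the glued order.\<close>

lemma chain_conversep_iff [simp]:
  "Complete_Partial_Order.chain le\<inverse>\<inverse> C \<longleftrightarrow> Complete_Partial_Order.chain le C"
  by (auto simp: Complete_Partial_Order.chain_def)

lemma wf_strict_if_finite_chains:
  assumes refl: "\<And>a. a \<in> A \<Longrightarrow> le a a"
    and trans: "\<And>a b c. a \<in> A \<Longrightarrow> b \<in> A \<Longrightarrow> c \<in> A \<Longrightarrow> le a b \<Longrightarrow> le b c \<Longrightarrow> le a c"
    and antisym: "\<And>a b. a \<in> A \<Longrightarrow> b \<in> A \<Longrightarrow> le a b \<Longrightarrow> le b a \<Longrightarrow> a = b"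
    and finite_chains: "\<forall>C. C \<subseteq> A \<and> Complete_Partial_Order.chain le C \<longrightarrow> finite C"
  shows "wf {(a, b). a \<in> A \<and> b \<in> A \<and> le a b \<and> a \<noteq> b}"
proof (rule ccontr)
  assume "\<not> ?thesis"
  then obtain f where f: "\<And>i. f (Suc i) \<in> A \<and> f i \<in> A \<and> le (f (Suc i)) (f i) \<and> f (Suc i) \<noteq> f i"
    unfolding wf_iff_no_infinite_down_chain by auto
  have f_in: "f i \<in> A" for i
    using f by blast
  have descending: "le (f j) (f i)" if "i \<le> j" for i j
    using that
  proof (induction j rule: dec_induct)
    case (step j)
    then show ?case using f[of j] trans[OF f_in f_in f_in] by blast
  qed (use refl f_in in blast)
  have "inj f"
  proof (rule injI)
    have neq: "f i \<noteq> f j" if "i < j" for i j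
    proof
      assume "f i = f j"
      then have "le (f i) (f (Suc i))"
        using descending[of "Suc i" j] that by simp
      then show False
        using f[of i] antisym[OF f_in f_in] by blast
    qed
    show "f i = f j \<Longrightarrow> i = j" for i j
      using neq[of i j] neq[of j i] by (cases i j rule: linorder_cases) auto
  qed
  then have "infinite (range f)"
    using finite_imageD by blast
  moreover have "Complete_Partial_Order.chain le (range f)"
  proof (rule chainI)
    fix a b assume "a \<in> range f" "b \<in> range f"
    then obtain i j where "a = f i" "b = f j" by blast
    then show "le a b \<or> le b a"
      using descending[of i j] descending[of j i] by (cases "i \<le> j") auto
  qed
  ultimately show False
    using finite_chains f_in by (metis image_subsetI)
qed

lemma ljoin_eqI:
  assumes "\<And>a b. a \<in> A \<Longrightarrow> b \<in> A \<Longrightarrow> le a b \<Longrightarrow> le b a \<Longrightarrow> a = b"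
    and "is_join A le a b c"
  shows "ljoin A le a b = c"
  using assms unfolding ljoin_def is_join_def by (intro the_equality) blast+

lemma lmeet_eqI:
  assumes "\<And>a b. a \<in> A \<Longrightarrow> b \<in> A \<Longrightarrow> le a b \<Longrightarrow> le b a \<Longrightarrow> a = b"
    and "is_meet A le a b c"
  shows "lmeet A le a b = c"
  using assms unfolding lmeet_def is_meet_def by (intro the_equality) blast+

lemma is_join_conversep: "is_join A le\<inverse>\<inverse> a b c = is_meet A le a b c"
  unfolding is_join_def is_meet_def by auto

lemma is_meet_conversep: "is_meet A le\<inverse>\<inverse> a b c = is_join A le a b c"
  unfolding is_join_def is_meet_def by auto

lemma ljoin_conversep: "ljoin A le\<inverse>\<inverse> = lmeet A le"
  unfolding ljoin_def lmeet_def is_join_conversep ..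

lemma lmeet_conversep: "lmeet A le\<inverse>\<inverse> = ljoin A le"
  unfolding ljoin_def lmeet_def is_meet_conversep ..

lemma lbot_conversep: "lbot A le\<inverse>\<inverse> = ltop A le"
  unfolding ltop_def lbot_def by simp

lemma is_filter_conversep: "is_filter A le\<inverse>\<inverse> F = is_ideal A le F"
  unfolding is_filter_def is_ideal_def lmeet_conversep by auto

lemma is_ideal_conversep: "is_ideal A le\<inverse>\<inverse> F = is_filter A le F"
  unfolding is_filter_def is_ideal_def ljoin_conversep by auto

locale carrier_lattice =
  fixes A :: "'a set" and le :: "'a \<Rightarrow> 'a \<Rightarrow> bool"
  assumes is_lattice: "is_lattice A le"
begin

lemma reflexive: "a \<in> A \<Longrightarrow> le a a"
  and antisymmetric: "a \<in> A \<Longrightarrow> b \<in> A \<Longrightarrow> le a b \<Longrightarrow> le b a \<Longrightarrow> a = b"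
  and transitive: "a \<in> A \<Longrightarrow> b \<in> A \<Longrightarrow> c \<in> A \<Longrightarrow> le a b \<Longrightarrow> le b c \<Longrightarrow> le a c"
  using is_lattice unfolding is_lattice_def by blast+

lemma is_join_ljoin:
  assumes "a \<in> A" "b \<in> A"
  shows "is_join A le a b (ljoin A le a b)"
proof -
  obtain c where "is_join A le a b c"
    using is_lattice assms unfolding is_lattice_def by blast
  with ljoin_eqI[OF antisymmetric] show ?thesis by simp
qed

lemma is_meet_lmeet:
  assumes "a \<in> A" "b \<in> A"
  shows "is_meet A le a b (lmeet A le a b)"
proof -
  obtain c where "is_meet A le a b c"
    using is_lattice assms unfolding is_lattice_def by blast
  with lmeet_eqI[OF antisymmetric] show ?thesis by simp
qed

lemma join_closed: "a \<in> A \<Longrightarrow> b \<in> A \<Longrightarrow> ljoin A le a b \<in> A"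
  and join_upper1: "a \<in> A \<Longrightarrow> b \<in> A \<Longrightarrow> le a (ljoin A le a b)"
  and join_upper2: "a \<in> A \<Longrightarrow> b \<in> A \<Longrightarrow> le b (ljoin A le a b)"
  and join_least: "a \<in> A \<Longrightarrow> b \<in> A \<Longrightarrow> d \<in> A \<Longrightarrow> le a d \<Longrightarrow> le b d \<Longrightarrow> le (ljoin A le a b) d"
  using is_join_ljoin unfolding is_join_def by blast+

lemma meet_closed: "a \<in> A \<Longrightarrow> b \<in> A \<Longrightarrow> lmeet A le a b \<in> A"
  and meet_lower1: "a \<in> A \<Longrightarrow> b \<in> A \<Longrightarrow> le (lmeet A le a b) a"
  and meet_lower2: "a \<in> A \<Longrightarrow> b \<in> A \<Longrightarrow> le (lmeet A le a b) b"
  using is_meet_lmeet unfolding is_meet_def by blast+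

lemma join_le_iff:
  "a \<in> A \<Longrightarrow> b \<in> A \<Longrightarrow> d \<in> A \<Longrightarrow> le (ljoin A le a b) d \<longleftrightarrow> le a d \<and> le b d"
  using join_least transitive[OF _ join_closed _ join_upper1] transitive[OF _ join_closed _ join_upper2] by blast

lemma join_absorb1: "a \<in> A \<Longrightarrow> b \<in> A \<Longrightarrow> le b a \<Longrightarrow> ljoin A le a b = a"
  by (rule antisymmetric) (simp_all add: join_closed join_least join_upper1 reflexive)

lemma join_absorb2: "a \<in> A \<Longrightarrow> b \<in> A \<Longrightarrow> le a b \<Longrightarrow> ljoin A le a b = b"
  by (rule antisymmetric) (simp_all add: join_closed join_least join_upper2 reflexive)

lemma eq_if_same_upper_bounds:
  "c \<in> A \<Longrightarrow> c' \<in> A \<Longrightarrow> (\<And>d. d \<in> A \<Longrightarrow> le c d \<longleftrightarrow> le c' d) \<Longrightarrow> c = c'"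
  using antisymmetric reflexive by blast

lemma join_assoc_absorb:
  assumes "a \<in> A" "b \<in> A" "c \<in> A" "le b c"
  shows "ljoin A le (ljoin A le a b) c = ljoin A le a c"
proof (rule eq_if_same_upper_bounds)
  fix d assume "d \<in> A"
  with assms transitive[of b c d] show "le (ljoin A le (ljoin A le a b) c) d \<longleftrightarrow> le (ljoin A le a c) d"
    by (simp add: join_le_iff join_closed) blast
qed (simp_all add: assms join_closed)

lemma join_join_distrib:
  assumes "a \<in> A" "b \<in> A" "c \<in> A"
  shows "ljoin A le (ljoin A le a b) c = ljoin A le (ljoin A le a c) (ljoin A le b c)"
  using assms by (intro eq_if_same_upper_bounds) (simp_all add: join_le_iff join_closed conj_ac)

end

lemma is_lattice_conversep:
  assumes "is_lattice A le"
  shows "is_lattice A le\<inverse>\<inverse>"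
proof -
  interpret carrier_lattice A le
    using assms by unfold_locales
  show ?thesis
    unfolding is_lattice_def is_join_conversep is_meet_conversep
    by (intro conjI ballI impI; (elim conjE)?)
      (auto intro: reflexive antisymmetric transitive[rotated 3] is_join_ljoin is_meet_lmeet)
qed

lemma fin_length_lattice_conversep:
  "fin_length_lattice A le \<Longrightarrow> fin_length_lattice A le\<inverse>\<inverse>"
  unfolding fin_length_lattice_def chain_conversep_iff by (simp add: is_lattice_conversep)

lemma fin_length_lattice_bot:
  assumes fl: "fin_length_lattice A le"
  shows "lbot A le \<in> A" and "b \<in> A \<Longrightarrow> le (lbot A le) b"
proof -
  have lattice: "is_lattice A le" and nonempty: "A \<noteq> {}"
    and finite_chains: "\<forall>C. C \<subseteq> A \<and> Complete_Partial_Order.chain le C \<longrightarrow> finite C"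
    using fl unfolding fin_length_lattice_def by simp_all
  interpret carrier_lattice A le
    using lattice by unfold_locales
  obtain a0 where a0: "a0 \<in> A"
    using nonempty by blast
  obtain m where m: "m \<in> A"
    and minimal: "\<And>b. (b, m) \<in> {(a, b). a \<in> A \<and> b \<in> A \<and> le a b \<and> a \<noteq> b} \<Longrightarrow> b \<notin> A"
  proof -
    have "wf {(a, b). a \<in> A \<and> b \<in> A \<and> le a b \<and> a \<noteq> b}"
      using reflexive transitive antisymmetric finite_chains by (rule wf_strict_if_finite_chains)
    then show ?thesis
      using a0 that by (rule wfE_min)
  qed
  have least: "le m b" if "b \<in> A" for b
  proof -
    have "lmeet A le m b = m"
      using minimal[of "lmeet A le m b"] meet_closed[OF m that] meet_lower1[OF m that] m by auto
    then show ?thesis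
      using meet_lower2[OF m that] by simp
  qed
  have "lbot A le = m"
    unfolding lbot_def using m least antisymmetric by blast
  then show "lbot A le \<in> A" and "b \<in> A \<Longrightarrow> le (lbot A le) b"
    using m least by simp_all
qed

lemma fin_length_lattice_top:
  assumes "fin_length_lattice A le"
  shows "ltop A le \<in> A" and "b \<in> A \<Longrightarrow> le b (ltop A le)"
  using fin_length_lattice_bot[OF fin_length_lattice_conversep[OF assms]]
  by (simp_all add: lbot_conversep)

lemma fin_length_type_wf:
  assumes "fin_length_type TYPE('i::order)"
  shows "wf {(x::'i, y). x < y}" and "wf {(x::'i, y). y < x}"
proof -
  have chains: "\<forall>C. C \<subseteq> UNIV \<and> Complete_Partial_Order.chain (\<le>) C \<longrightarrow> finite (C::'i set)"
    using assms unfolding fin_length_type_def by simp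
  have "wf {(x::'i, y). x \<in> UNIV \<and> y \<in> UNIV \<and> x \<le> y \<and> x \<noteq> y}"
    using order_refl order_trans order_antisym chains by (rule wf_strict_if_finite_chains)
  moreover have "{(x::'i, y). x \<in> UNIV \<and> y \<in> UNIV \<and> x \<le> y \<and> x \<noteq> y} = {(x, y). x < y}"
    by (auto simp: less_le)
  ultimately show "wf {(x::'i, y). x < y}"
    by simp
  have "wf {(x::'i, y). x \<in> UNIV \<and> y \<in> UNIV \<and> (\<le>)\<inverse>\<inverse> x y \<and> x \<noteq> y}"
  proof (rule wf_strict_if_finite_chains)
    show "\<forall>C. C \<subseteq> UNIV \<and> Complete_Partial_Order.chain (\<le>)\<inverse>\<inverse> C \<longrightarrow> finite (C::'i set)"
      using chains by simp
  qed auto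
  moreover have "{(x::'i, y). x \<in> UNIV \<and> y \<in> UNIV \<and> (\<le>)\<inverse>\<inverse> x y \<and> x \<noteq> y} = {(x, y). y < x}"
    by (auto simp: less_le)
  ultimately show "wf {(x::'i, y). y < x}"
    by simp
qed

lemma covers_imp_less: "x \<prec> y \<Longrightarrow> x < y"
  unfolding covers_def by simp

lemma covers_imp_le: "x \<prec> y \<Longrightarrow> x \<le> y"
  unfolding covers_def by (simp add: less_imp_le)

lemma exists_upper_cover:
  assumes "fin_length_type TYPE('i::order)" and "(x::'i) < w"
  shows "\<exists>y. x \<prec> y \<and> y \<le> w"
proof -
  obtain y where y: "y \<in> {y. x < y \<and> y \<le> w}"
    and minimal: "\<And>z. (z, y) \<in> {(a, b). a < b} \<Longrightarrow> z \<notin> {y. x < y \<and> y \<le> w}"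
    using wfE_min[OF fin_length_type_wf(1)[OF assms(1)], of w "{y. x < y \<and> y \<le> w}"] assms(2)
    by blast
  have "x \<prec> y"
    unfolding covers_def using y minimal by fastforce
  with y show ?thesis by blast
qed

lemma exists_lower_cover:
  assumes "fin_length_type TYPE('i::order)" and "(x::'i) < w"
  shows "\<exists>y. x \<le> y \<and> y \<prec> w"
proof -
  obtain y where y: "y \<in> {y. x \<le> y \<and> y < w}"
    and maximal: "\<And>z. (z, y) \<in> {(a, b). b < a} \<Longrightarrow> z \<notin> {y. x \<le> y \<and> y < w}"
    using wfE_min[OF fin_length_type_wf(2)[OF assms(1)], of x "{y. x \<le> y \<and> y < w}"] assms(2)
    by blast
  have "y \<prec> w"
    unfolding covers_def using y maximal by fastforce
  with y show ?thesis by blast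
qed

section \<open>Glued systems\<close>

locale glued_sum =
  fixes L :: "'i::lattice \<Rightarrow> 'a set" and le :: "'i \<Rightarrow> 'a \<Rightarrow> 'a \<Rightarrow> bool"
  assumes fin_length: "fin_length_type TYPE('i)"
    and glued_system: "glued_system L le"
begin

abbreviation join :: "'i \<Rightarrow> 'a \<Rightarrow> 'a \<Rightarrow> 'a" where "join x \<equiv> ljoin (L x) (le x)"
abbreviation zero :: "'i \<Rightarrow> 'a" where "zero x \<equiv> lbot (L x) (le x)"
abbreviation one :: "'i \<Rightarrow> 'a" where "one x \<equiv> ltop (L x) (le x)"

lemma component_fin_length: "fin_length_lattice (L x) (le x)"
  and overlap_filter_ideal: "x \<le> y \<Longrightarrow> L x \<inter> L y \<noteq> {} \<Longrightarrow>
     is_filter (L x) (le x) (L x \<inter> L y) \<and> is_ideal (L y) (le y) (L x \<inter> L y)"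
  and overlap_order_agree: "x \<le> y \<Longrightarrow> L x \<inter> L y \<noteq> {} \<Longrightarrow>
     \<forall>a\<in>L x \<inter> L y. \<forall>b\<in>L x \<inter> L y. le x a b \<longleftrightarrow> le y a b"
  and covers_overlap_nonempty: "x \<prec> y \<Longrightarrow> L x \<inter> L y \<noteq> {}"
  and overlap_subset: "L x \<inter> L y \<subseteq> L (inf x y) \<inter> L (sup x y)"
  using glued_system unfolding glued_system_def by simp_all

lemma component_lattice: "carrier_lattice (L x) (le x)"
  using component_fin_length unfolding fin_length_lattice_def carrier_lattice_def by simp

lemmas component_refl = carrier_lattice.reflexive[OF component_lattice]
  and component_antisym = carrier_lattice.antisymmetric[OF component_lattice]
  and component_trans = carrier_lattice.transitive[OF component_lattice]
  and join_closed = carrier_lattice.join_closed[OF component_lattice]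
  and join_upper1 = carrier_lattice.join_upper1[OF component_lattice]
  and join_upper2 = carrier_lattice.join_upper2[OF component_lattice]
  and join_least = carrier_lattice.join_least[OF component_lattice]
  and join_absorb1 = carrier_lattice.join_absorb1[OF component_lattice]
  and join_absorb2 = carrier_lattice.join_absorb2[OF component_lattice]
  and join_assoc_absorb = carrier_lattice.join_assoc_absorb[OF component_lattice]
  and join_join_distrib = carrier_lattice.join_join_distrib[OF component_lattice]
  and zero_in = fin_length_lattice_bot(1)[OF component_fin_length]
  and zero_le = fin_length_lattice_bot(2)[OF component_fin_length]
  and one_in = fin_length_lattice_top(1)[OF component_fin_length]
  and le_one = fin_length_lattice_top(2)[OF component_fin_length]

lemma mem_inf: "a \<in> L x \<Longrightarrow> a \<in> L y \<Longrightarrow> a \<in> L (inf x y)"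
  and mem_sup: "a \<in> L x \<Longrightarrow> a \<in> L y \<Longrightarrow> a \<in> L (sup x y)"
  using overlap_subset by blast+

lemma covers_overlap: "x \<prec> y \<Longrightarrow> \<exists>c. c \<in> L x \<and> c \<in> L y"
  using covers_overlap_nonempty by blast

text \<open>In the following lemmas, \<open>c\<close> only witnesses that \<open>L x \<inter> L y \<noteq> {}\<close>.\<close>

lemma overlap_le_iff:
  "x \<le> y \<Longrightarrow> a \<in> L x \<Longrightarrow> a \<in> L y \<Longrightarrow> b \<in> L x \<Longrightarrow> b \<in> L y \<Longrightarrow> le x a b \<longleftrightarrow> le y a b"
  using overlap_order_agree by blast

lemma overlap_up_closed:
  assumes "x \<le> y" "c \<in> L x" "c \<in> L y" "a \<in> L x" "b \<in> L x" "a \<in> L y" "le x a b"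
  shows "b \<in> L y"
proof -
  have "is_filter (L x) (le x) (L x \<inter> L y)"
    using overlap_filter_ideal assms(1-3) by blast
  then show ?thesis
    using assms(4-7) unfolding is_filter_def by blast
qed

lemma overlap_down_closed:
  assumes "x \<le> y" "c \<in> L x" "c \<in> L y" "a \<in> L y" "b \<in> L y" "b \<in> L x" "le y a b"
  shows "a \<in> L x"
proof -
  have "is_ideal (L y) (le y) (L x \<inter> L y)"
    using overlap_filter_ideal assms(1-3) by blast
  then show ?thesis
    using assms(4-7) unfolding is_ideal_def by blast
qed

lemma overlap_join:
  assumes xy: "x \<le> y" and a: "a \<in> L x" "a \<in> L y" and b: "b \<in> L x" "b \<in> L y"
  shows "join x a b = join y a b"
proof -
  have "is_ideal (L y) (le y) (L x \<inter> L y)"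
    using overlap_filter_ideal xy a by blast
  then have jx: "join y a b \<in> L x"
    using a b unfolding is_ideal_def by blast
  have jy: "join y a b \<in> L y"
    using a b by (simp add: join_closed)
  have "is_join (L x) (le x) a b (join y a b)"
    unfolding is_join_def
  proof (intro conjI ballI impI)
    show "le x a (join y a b)" "le x b (join y a b)"
      using overlap_le_iff[OF xy _ _ jx jy] a b join_upper1 join_upper2 by simp_all
    fix d assume d: "d \<in> L x" "le x a d \<and> le x b d"
    then have "d \<in> L y"
      using overlap_up_closed[OF xy a a(1) d(1) a(2)] by blast
    then show "le x (join y a b) d"
      using d overlap_le_iff[OF xy] a b jx jy join_least by simp
  qed (rule jx)
  then show ?thesis
    using ljoin_eqI[of "L x" "le x" a b "join y a b"] component_antisym[of _ x] by blast
qed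

lemma zero_mem_lower: "x \<le> y \<Longrightarrow> c \<in> L x \<Longrightarrow> c \<in> L y \<Longrightarrow> zero y \<in> L x"
  using overlap_down_closed zero_in zero_le by blast

lemma one_mem_upper: "x \<le> y \<Longrightarrow> c \<in> L x \<Longrightarrow> c \<in> L y \<Longrightarrow> one x \<in> L y"
  using overlap_up_closed one_in le_one by blast

lemma zero_le_iff_mem:
  assumes "x \<le> y" "c \<in> L x" "c \<in> L y" "a \<in> L x"
  shows "le x (zero y) a \<longleftrightarrow> a \<in> L y"
proof
  have z: "zero y \<in> L x"
    using zero_mem_lower[OF assms(1-3)] .
  show "le x (zero y) a \<Longrightarrow> a \<in> L y"
    using overlap_up_closed[OF assms(1-3) z assms(4) zero_in] .
  show "a \<in> L y \<Longrightarrow> le x (zero y) a"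
    using overlap_le_iff[OF assms(1) z zero_in assms(4)] zero_le by blast
qed

lemma convex:
  "x \<le> y \<Longrightarrow> y \<le> z \<Longrightarrow> a \<in> L x \<Longrightarrow> a \<in> L z \<Longrightarrow> a \<in> L y"
proof (induction x arbitrary: y rule: wf_induct_rule[OF fin_length_type_wf(2)[OF fin_length]])
  case (1 x)
  show ?case
  proof (cases "x = y")
    case False
    then obtain y' where y': "x \<prec> y'" "y' \<le> y"
      using exists_upper_cover[OF fin_length] "1.prems"(1) by force
    obtain c where c: "c \<in> L x" "c \<in> L y'"
      using covers_overlap[OF y'(1)] by blast
    have xy': "x \<le> y'" and y'z: "y' \<le> z"
      using y' "1.prems"(2) covers_imp_le by (blast intro: order_trans)+
    text \<open>\<open>1\<^sub>x\<close> lies in \<open>L y'\<close> and in \<open>L z\<close>, so \<open>0\<^sub>z\<close> lies in \<open>L x\<close> and in \<open>L y'\<close>;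
      as \<open>a \<ge> 0\<^sub>z\<close> in \<open>L x\<close>, the filter property puts \<open>a\<close> into \<open>L y'\<close>.\<close>
    have xz: "x \<le> z"
      using xy' y'z by (rule order_trans)
    have "one x \<in> L y'" "one x \<in> L z"
      using one_mem_upper[OF xy' c] one_mem_upper[OF xz "1.prems"(3,4)] .
    then have "zero z \<in> L y'"
      using zero_mem_lower[OF y'z] by blast
    moreover have "zero z \<in> L x" "le x (zero z) a"
      using zero_mem_lower[OF xz "1.prems"(3,4)] zero_le_iff_mem[OF xz "1.prems"(3,4,3)] "1.prems"(4)
      by simp_all
    ultimately have "a \<in> L y'"
      using overlap_up_closed[OF xy' c _ "1.prems"(3)] by blast
    then show ?thesis
      using "1.IH"[of y' y] covers_imp_less[OF y'(1)] y'(2) "1.prems"(2,4) by blast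
  qed (use "1.prems" in simp)
qed

section \<open>Lifting an element along covers\<close>

text \<open>The endpoint \<open>r \<in> L w\<close> does not depend on the
  chain of covers, and it is the least element of \<open>L w\<close> above \<open>a\<close> in the glued order.\<close>

inductive lifts_to :: "'i \<Rightarrow> 'i \<Rightarrow> 'a \<Rightarrow> 'a \<Rightarrow> bool" where
  lifts_to_refl: "lifts_to w w a a"
| lifts_to_step: "x \<prec> y \<Longrightarrow> y \<le> w \<Longrightarrow> lifts_to y w (join x a (zero y)) r \<Longrightarrow> lifts_to x w a r"

lemma lifts_to_le: "lifts_to x w a r \<Longrightarrow> x \<le> w"
  by (induction rule: lifts_to.induct) (auto dest: covers_imp_le)

lemma cover_step:
  assumes "x \<prec> y" "a \<in> L x"
  shows "zero y \<in> L x" "join x a (zero y) \<in> L x" "join x a (zero y) \<in> L y"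
proof -
  obtain c where c: "c \<in> L x" "c \<in> L y"
    using covers_overlap[OF assms(1)] by blast
  show z: "zero y \<in> L x"
    using zero_mem_lower[OF covers_imp_le[OF assms(1)] c] .
  show j: "join x a (zero y) \<in> L x"
    using join_closed[OF assms(2) z] .
  show "join x a (zero y) \<in> L y"
    using overlap_up_closed[OF covers_imp_le[OF assms(1)] c z j zero_in join_upper2[OF assms(2) z]] .
qed

lemma lifts_to_mem: "lifts_to x w a r \<Longrightarrow> a \<in> L x \<Longrightarrow> r \<in> L w"
  by (induction rule: lifts_to.induct) (auto dest: cover_step)

lemma lifts_to_exists: "x \<le> w \<Longrightarrow> a \<in> L x \<Longrightarrow> \<exists>r. lifts_to x w a r"
proof (induction x arbitrary: a rule: wf_induct_rule[OF fin_length_type_wf(2)[OF fin_length]])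
  case (1 x)
  show ?case
  proof (cases "x = w")
    case False
    then obtain y where y: "x \<prec> y" "y \<le> w"
      using exists_upper_cover[OF fin_length] "1.prems"(1) by force
    then obtain r where "lifts_to y w (join x a (zero y)) r"
      using "1.IH" covers_imp_less[OF y(1)] cover_step(3)[OF y(1) "1.prems"(2)] by blast
    then show ?thesis
      using lifts_to_step[OF y] by blast
  qed (use lifts_to_refl in blast)
qed

lemma lifts_to_trans: "lifts_to x y a s \<Longrightarrow> lifts_to y w s r \<Longrightarrow> lifts_to x w a r"
proof (induction rule: lifts_to.induct)
  case (lifts_to_step x y' y a s)
  have "y' \<le> w"
    using lifts_to_step.hyps(2) lifts_to_le[OF lifts_to_step.prems] by (rule order_trans)
  then show ?case
    using lifts_to.lifts_to_step[OF lifts_to_step.hyps(1)] lifts_to_step.IH[OF lifts_to_step.prems] by blast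
qed

lemma lifts_to_self: "lifts_to w w a r \<Longrightarrow> r = a"
  by (cases rule: lifts_to.cases)
    (auto dest!: lifts_to_le covers_imp_less)

lemma lifts_to_direct:
  "lifts_to x w a r \<Longrightarrow> a \<in> L x \<Longrightarrow> c \<in> L x \<Longrightarrow> c \<in> L w \<Longrightarrow> r = join x a (zero w)"
proof (induction arbitrary: c rule: lifts_to.induct)
  case (lifts_to_refl w a)
  then show ?case
    using join_absorb1 zero_in zero_le by simp
next
  case (lifts_to_step x y w a r)
  have xy: "x \<le> y" and xw: "x \<le> w"
    using covers_imp_le[OF lifts_to_step.hyps(1)] lifts_to_step.hyps(2) by auto
  have zero_wx: "zero w \<in> L x"
    using zero_mem_lower[OF xw lifts_to_step.prems(2,3)] .
  have zero_wy: "zero w \<in> L y"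
    using convex[OF xy lifts_to_step.hyps(2) zero_wx zero_in] .
  note step = cover_step[OF lifts_to_step.hyps(1) lifts_to_step.prems(1)]
  have "r = join y (join x a (zero y)) (zero w)"
    using lifts_to_step.IH[OF step(3) zero_wy zero_in] .
  also have "\<dots> = join x (join x a (zero y)) (zero w)"
    using overlap_join[OF xy step(2,3) zero_wx zero_wy] by simp
  also have "\<dots> = join x a (zero w)"
    using join_assoc_absorb[OF lifts_to_step.prems(1) step(1) zero_wx]
      overlap_le_iff[OF xy step(1) zero_in zero_wx zero_wy] zero_le[OF zero_wy] by simp
  finally show ?case .
qed

text \<open>Two covers of \<open>x\<close> lead to the same element of \<open>L (y\<^sub>1 \<squnion> y\<^sub>2)\<close>: the element
  \<open>(a +\<^sub>x 0\<^sub>y\<^sub>1) +\<^sub>x 0\<^sub>y\<^sub>2\<close> lies in \<open>L y\<^sub>1 \<inter> L y\<^sub>2 \<subseteq> L (y\<^sub>1 \<squnion> y\<^sub>2)\<close>, so both lifts are direct.\<close>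

lemma cover_steps_confluent:
  assumes y1: "x \<prec> y1" and y2: "x \<prec> y2" and a: "a \<in> L x"
  shows "\<exists>t. lifts_to y1 (sup y1 y2) (join x a (zero y1)) t \<and>
             lifts_to y2 (sup y1 y2) (join x a (zero y2)) t"
proof -
  define v where "v = sup y1 y2"
  note s1 = cover_step[OF y1 a] and s2 = cover_step[OF y2 a]
  define e where "e = join x (join x a (zero y1)) (zero y2)"
  have ex: "e \<in> L x"
    unfolding e_def using join_closed s1(2) s2(1) by blast
  have "e \<in> L y1" "e \<in> L y2"
    using overlap_up_closed[OF covers_imp_le[OF y1] s1(2,3) s1(2) ex s1(3)]
      overlap_up_closed[OF covers_imp_le[OF y2] s2(1) zero_in s2(1) ex zero_in]
      join_upper1[OF s1(2) s2(1)] join_upper2[OF s1(2) s2(1)]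
    unfolding e_def by blast+
  then have ev: "e \<in> L v"
    unfolding v_def by (rule mem_sup)
  obtain t1 where t1: "lifts_to y1 v (join x a (zero y1)) t1"
    using lifts_to_exists[of y1 v] s1(3) unfolding v_def by auto
  obtain t2 where t2: "lifts_to y2 v (join x a (zero y2)) t2"
    using lifts_to_exists[of y2 v] s2(3) unfolding v_def by auto
  have "lifts_to x v a t1" "lifts_to x v a t2"
    using lifts_to_step[OF y1 _ t1] lifts_to_step[OF y2 _ t2] unfolding v_def by simp_all
  then have "t1 = t2"
    using lifts_to_direct[OF _ a ex ev] by metis
  then show ?thesis
    using t1 t2 unfolding v_def by blast
qed

lemma lifts_to_unique: "lifts_to x w a r \<Longrightarrow> lifts_to x w a r' \<Longrightarrow> a \<in> L x \<Longrightarrow> r = r'"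
proof (induction x arbitrary: a r r' rule: wf_induct_rule[OF fin_length_type_wf(2)[OF fin_length]])
  case (1 x)
  show ?case
  proof (cases "x = w")
    case True
    then show ?thesis
      using lifts_to_self "1.prems"(1,2) by blast
  next
    case False
    from "1.prems"(1) False obtain y1 where y1: "x \<prec> y1" "y1 \<le> w"
      and r: "lifts_to y1 w (join x a (zero y1)) r"
      by (cases rule: lifts_to.cases) auto
    from "1.prems"(2) False obtain y2 where y2: "x \<prec> y2" "y2 \<le> w"
      and r': "lifts_to y2 w (join x a (zero y2)) r'"
      by (cases rule: lifts_to.cases) auto
    obtain t where t1: "lifts_to y1 (sup y1 y2) (join x a (zero y1)) t"
      and t2: "lifts_to y2 (sup y1 y2) (join x a (zero y2)) t"
      using cover_steps_confluent[OF y1(1) y2(1) "1.prems"(3)] by blast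
    obtain s where s: "lifts_to (sup y1 y2) w t s"
      using lifts_to_exists[OF sup_least[OF y1(2) y2(2)]]
        lifts_to_mem[OF t1 cover_step(3)[OF y1(1) "1.prems"(3)]] by blast
    have "r = s"
      using "1.IH"[OF _ r lifts_to_trans[OF t1 s]] covers_imp_less[OF y1(1)]
        cover_step(3)[OF y1(1) "1.prems"(3)] by blast
    moreover have "r' = s"
      using "1.IH"[OF _ r' lifts_to_trans[OF t2 s]] covers_imp_less[OF y2(1)]
        cover_step(3)[OF y2(1) "1.prems"(3)] by blast
    ultimately show ?thesis
      by simp
  qed
qed

lemma lifts_to_mono:
  "lifts_to x w a r \<Longrightarrow> a \<in> L x \<Longrightarrow> b \<in> L x \<Longrightarrow> le x a b \<Longrightarrow> \<exists>r'. lifts_to x w b r' \<and> le w r r'"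
proof (induction arbitrary: b rule: lifts_to.induct)
  case (lifts_to_refl w a b)
  then show ?case
    using lifts_to.lifts_to_refl by blast
next
  case (lifts_to_step x y w a r b)
  note sa = cover_step[OF lifts_to_step.hyps(1) lifts_to_step.prems(1)]
  note sb = cover_step[OF lifts_to_step.hyps(1) lifts_to_step.prems(2)]
  have "le x (join x a (zero y)) (join x b (zero y))"
    using join_least[OF lifts_to_step.prems(1) sa(1) sb(2)] join_upper2[OF lifts_to_step.prems(2) sa(1)]
      component_trans[OF lifts_to_step.prems(1,2) sb(2) lifts_to_step.prems(3)
        join_upper1[OF lifts_to_step.prems(2) sa(1)]] by blast
  then have "le y (join x a (zero y)) (join x b (zero y))"
    using overlap_le_iff[OF covers_imp_le[OF lifts_to_step.hyps(1)] sa(2,3) sb(2,3)] by simp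
  then obtain r' where "lifts_to y w (join x b (zero y)) r'" "le w r r'"
    using lifts_to_step.IH[OF sa(3) sb(3)] by blast
  then show ?case
    using lifts_to.lifts_to_step[OF lifts_to_step.hyps(1,2)] by blast
qed

lemma lifts_to_join:
  "lifts_to x w a r \<Longrightarrow> a \<in> L x \<Longrightarrow> b \<in> L x \<Longrightarrow>
    \<exists>r'. lifts_to x w b r' \<and> lifts_to x w (join x a b) (join w r r')"
proof (induction arbitrary: b rule: lifts_to.induct)
  case (lifts_to_refl w a b)
  then show ?case
    using lifts_to.lifts_to_refl by blast
next
  case (lifts_to_step x y w a r b)
  note sa = cover_step[OF lifts_to_step.hyps(1) lifts_to_step.prems(1)]
  note sb = cover_step[OF lifts_to_step.hyps(1) lifts_to_step.prems(2)]
  have "join x (join x a b) (zero y) = join y (join x a (zero y)) (join x b (zero y))"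
    using join_join_distrib[OF lifts_to_step.prems(1,2) sa(1)]
      overlap_join[OF covers_imp_le[OF lifts_to_step.hyps(1)] sa(2,3) sb(2,3)] by simp
  moreover obtain r' where "lifts_to y w (join x b (zero y)) r'"
    and "lifts_to y w (join y (join x a (zero y)) (join x b (zero y))) (join w r r')"
    using lifts_to_step.IH[OF sa(3) sb(3)] by blast
  ultimately show ?case
    using lifts_to.lifts_to_step[OF lifts_to_step.hyps(1,2)] by metis
qed

lemma lifts_to_zero: "lifts_to x w a r \<Longrightarrow> a = zero x \<Longrightarrow> r = zero w"
proof (induction rule: lifts_to.induct)
  case (lifts_to_step x y w a r)
  have "join x (zero x) (zero y) = zero y"
    using join_absorb2[OF zero_in cover_step(1)[OF lifts_to_step.hyps(1) zero_in]]
      zero_le[OF cover_step(1)[OF lifts_to_step.hyps(1) zero_in]] by blast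
  then show ?case
    using lifts_to_step by simp
qed simp

definition lift :: "'i \<Rightarrow> 'i \<Rightarrow> 'a \<Rightarrow> 'a" where
  "lift x w a = (THE r. lifts_to x w a r)"

lemma lift_eqI: "lifts_to x w a r \<Longrightarrow> a \<in> L x \<Longrightarrow> lift x w a = r"
  unfolding lift_def using lifts_to_unique by blast

lemma lifts_to_lift: "x \<le> w \<Longrightarrow> a \<in> L x \<Longrightarrow> lifts_to x w a (lift x w a)"
  using lifts_to_exists lift_eqI by metis

lemma lift_mem: "x \<le> w \<Longrightarrow> a \<in> L x \<Longrightarrow> lift x w a \<in> L w"
  using lifts_to_lift lifts_to_mem by blast

lemma lift_refl: "a \<in> L x \<Longrightarrow> lift x x a = a"
  using lift_eqI[OF lifts_to_refl] .

lemma lift_trans: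
  assumes "x \<le> y" "y \<le> w" "a \<in> L x"
  shows "lift y w (lift x y a) = lift x w a"
proof -
  have "lifts_to x w a (lift y w (lift x y a))"
    using lifts_to_trans[OF lifts_to_lift lifts_to_lift[OF assms(2) lift_mem]] assms by blast
  then show ?thesis
    using lift_eqI assms(3) by metis
qed

lemma lift_direct: "x \<le> w \<Longrightarrow> a \<in> L x \<Longrightarrow> c \<in> L x \<Longrightarrow> c \<in> L w \<Longrightarrow> lift x w a = join x a (zero w)"
  using lifts_to_direct lifts_to_lift by blast

lemma lift_id:
  assumes "x \<le> w" "a \<in> L x" "a \<in> L w"
  shows "lift x w a = a"
  using lift_direct[OF assms(1,2) assms(2,3)] join_absorb1[OF assms(2) zero_mem_lower[OF assms]]
    zero_le_iff_mem[OF assms(1) assms(2,3) assms(2)] assms(3) by simp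

lemma lift_mono:
  assumes "x \<le> w" "a \<in> L x" "b \<in> L x" "le x a b"
  shows "le w (lift x w a) (lift x w b)"
proof -
  obtain r' where "lifts_to x w b r'" "le w (lift x w a) r'"
    using lifts_to_mono[OF lifts_to_lift[OF assms(1,2)] assms(2-4)] by blast
  then show ?thesis
    using lift_eqI assms(3) by metis
qed

lemma lift_join:
  assumes "x \<le> w" "a \<in> L x" "b \<in> L x"
  shows "lift x w (join x a b) = join w (lift x w a) (lift x w b)"
proof -
  obtain r' where "lifts_to x w b r'" "lifts_to x w (join x a b) (join w (lift x w a) r')"
    using lifts_to_join[OF lifts_to_lift[OF assms(1,2)] assms(2,3)] by blast
  then show ?thesis
    using lift_eqI join_closed[OF assms(2,3)] assms(3) by metis
qed

lemma lift_zero: "x \<le> w \<Longrightarrow> lift x w (zero x) = zero w"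
  using lifts_to_zero lifts_to_lift zero_in by blast

section \<open>The glued order\<close>

definition index :: "'a \<Rightarrow> 'i" where
  "index a = (THE x. a \<in> L x \<and> (\<forall>y. a \<in> L y \<longrightarrow> x \<le> y))"

lemma index_exists:
  assumes "a \<in> L x"
  shows "\<exists>m. a \<in> L m \<and> (\<forall>y. a \<in> L y \<longrightarrow> m \<le> y)"
proof -
  obtain m where m: "a \<in> L m" and minimal: "\<And>y. (y, m) \<in> {(x, y). x < y} \<Longrightarrow> a \<notin> L y"
    using wfE_min[OF fin_length_type_wf(1)[OF fin_length], of x "{x. a \<in> L x}"] assms by auto
  have "m \<le> y" if "a \<in> L y" for y
  proof -
    have "\<not> inf m y < m"
      using minimal[of "inf m y"] mem_inf[OF m that] by blast
    then have "inf m y = m"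
      by (simp add: less_le)
    then show ?thesis
      by (simp add: le_iff_inf)
  qed
  with m show ?thesis
    by blast
qed

lemma mem_index: "a \<in> L x \<Longrightarrow> a \<in> L (index a)"
  and index_le: "a \<in> L x \<Longrightarrow> index a \<le> x"
proof -
  assume "a \<in> L x"
  then obtain m where m: "a \<in> L m" "\<forall>y. a \<in> L y \<longrightarrow> m \<le> y"
    using index_exists by blast
  then have "index a = m"
    unfolding index_def by (blast intro: order_antisym)
  then show "a \<in> L (index a)" "index a \<le> x"
    using m \<open>a \<in> L x\<close> by simp_all
qed

abbreviation carrier :: "'a set" where "carrier \<equiv> glued_carrier L"
abbreviation gle :: "'a \<Rightarrow> 'a \<Rightarrow> bool" where "gle \<equiv> glued_le L le"

lemma mem_carrier_iff: "a \<in> carrier \<longleftrightarrow> (\<exists>x. a \<in> L x)"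
  unfolding glued_carrier_def by simp

lemma gle_if_le: "a \<in> L x \<Longrightarrow> b \<in> L x \<Longrightarrow> le x a b \<Longrightarrow> gle a b"
  unfolding glued_le_def by (rule tranclp.r_into_trancl) blast

lemma gle_trans: "gle a b \<Longrightarrow> gle b c \<Longrightarrow> gle a c"
  unfolding glued_le_def by (rule tranclp_trans)

lemma gle_carrier: "gle a b \<Longrightarrow> a \<in> carrier \<and> b \<in> carrier"
  unfolding glued_le_def by (induction rule: tranclp_induct) (auto simp: mem_carrier_iff)

lemma index_mono:
  assumes "a \<in> L x" "b \<in> L x" "le x a b"
  shows "index a \<le> index b"
proof -
  have "a \<in> L (index b)"
    using overlap_down_closed[OF index_le[OF assms(2)] mem_index[OF assms(2)] assms(2,1,2)
        mem_index[OF assms(2)] assms(3)] .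
  then show ?thesis
    using index_le by blast
qed

text \<open>An explicit description of the glued order: \<open>gle a c \<longleftrightarrow> lifted_le a c\<close>.\<close>

definition lifted_le :: "'a \<Rightarrow> 'a \<Rightarrow> bool" where
  "lifted_le a c \<longleftrightarrow> index a \<le> index c \<and> le (index c) (lift (index a) (index c) a) c"

lemma lifted_le_if_le:
  assumes "a \<in> L x" "c \<in> L x" "le x a c"
  shows "lifted_le a c"
proof -
  let ?m = "index c" and ?n = "index a"
  let ?p = "lift ?n ?m a"
  have nm: "?n \<le> ?m"
    using index_mono[OF assms] .
  have an: "a \<in> L ?n" and cm: "c \<in> L ?m" and mx: "?m \<le> x" and nx: "?n \<le> x"
    using mem_index index_le assms(1,2) by blast+
  have pm: "?p \<in> L ?m"
    using lift_mem[OF nm an] .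
  have zero_xm: "zero x \<in> L ?m"
    using zero_mem_lower[OF mx cm assms(2)] .
  text \<open>Lifting \<open>p\<close> on to \<open>L x\<close> gives back \<open>a\<close>, and that lift is \<open>p +\<^sub>m 0\<^sub>x \<ge> p\<close>.\<close>
  have "join ?m ?p (zero x) = lift ?m x ?p"
    using lift_direct[OF mx pm cm assms(2)] by simp
  also have "\<dots> = a"
    using lift_trans[OF nm mx an] lift_id[OF nx an assms(1)] by simp
  finally have q: "join ?m ?p (zero x) = a" .
  then have "a \<in> L ?m"
    using join_closed[OF pm zero_xm] by simp
  then have "le ?m a c"
    using overlap_le_iff[OF mx _ assms(1) cm assms(2)] assms(3) by simp
  then have "le ?m ?p c"
    using component_trans[OF pm _ cm join_upper1[OF pm zero_xm]] q join_closed[OF pm zero_xm] by simp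
  then show ?thesis
    unfolding lifted_le_def using nm by simp
qed

lemma lifted_le_trans:
  assumes ab: "lifted_le a b" and bc: "lifted_le b c"
    and a: "a \<in> L xa" and b: "b \<in> L xb" and c: "c \<in> L xc"
  shows "lifted_le a c"
proof -
  let ?na = "index a" and ?nb = "index b" and ?nc = "index c"
  have 1: "?na \<le> ?nb" "le ?nb (lift ?na ?nb a) b"
    and 2: "?nb \<le> ?nc" "le ?nc (lift ?nb ?nc b) c"
    using ab bc unfolding lifted_le_def by auto
  have an: "a \<in> L ?na" and bn: "b \<in> L ?nb" and cn: "c \<in> L ?nc"
    using mem_index a b c by blast+
  have ac: "?na \<le> ?nc"
    using 1(1) 2(1) by (rule order_trans)
  have "le ?nc (lift ?na ?nc a) (lift ?nb ?nc b)"
    using lift_mono[OF 2(1) lift_mem[OF 1(1) an] bn 1(2)] lift_trans[OF 1(1) 2(1) an] by simp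
  then have "le ?nc (lift ?na ?nc a) c"
    using component_trans[OF lift_mem[OF ac an] lift_mem[OF 2(1) bn] cn _ 2(2)] by simp
  then show ?thesis
    unfolding lifted_le_def using ac by simp
qed

lemma lifted_le_if_gle: "gle a c \<Longrightarrow> lifted_le a c"
  unfolding glued_le_def
proof (induction rule: tranclp_induct)
  case (base y)
  then show ?case
    using lifted_le_if_le by blast
next
  case (step y z)
  then obtain x where x: "y \<in> L x" "z \<in> L x" "le x y z"
    by blast
  obtain xa where "a \<in> L xa"
    using gle_carrier[of a y] step(1) unfolding glued_le_def mem_carrier_iff by blast
  then show ?case
    using lifted_le_trans[OF step(3) lifted_le_if_le[OF x]] x by blast
qed

lemma gle_if_lifts_to: "lifts_to x w a r \<Longrightarrow> a \<in> L x \<Longrightarrow> gle a r"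
proof (induction rule: lifts_to.induct)
  case (lifts_to_refl w a)
  then show ?case
    using gle_if_le component_refl by blast
next
  case (lifts_to_step x y w a r)
  note s = cover_step[OF lifts_to_step.hyps(1) lifts_to_step.prems]
  have "gle a (join x a (zero y))"
    using gle_if_le[OF lifts_to_step.prems s(2) join_upper1[OF lifts_to_step.prems s(1)]] .
  then show ?case
    using gle_trans lifts_to_step.IH[OF s(3)] by blast
qed

lemma gle_if_lift_le:
  assumes "a \<in> L x" "c \<in> L w" "x \<le> w" "le w (lift x w a) c"
  shows "gle a c"
  using gle_trans[OF gle_if_lifts_to[OF lifts_to_lift[OF assms(3,1)] assms(1)]
      gle_if_le[OF lift_mem[OF assms(3,1)] assms(2,4)]] .

lemma gle_antisym:
  assumes "gle a c" "gle c a"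
  shows "a = c"
proof -
  have ac: "lifted_le a c" and ca: "lifted_le c a"
    using lifted_le_if_gle assms by blast+
  then have eq: "index a = index c"
    unfolding lifted_le_def by (simp add: order_antisym)
  obtain x y where "a \<in> L x" "c \<in> L y"
    using gle_carrier[OF assms(1)] mem_carrier_iff by blast
  then have a: "a \<in> L (index a)" and c: "c \<in> L (index a)"
    using mem_index eq by metis+
  have "le (index a) a c" "le (index a) c a"
    using ac ca lift_refl[OF a] lift_refl[OF c] eq unfolding lifted_le_def by simp_all
  then show ?thesis
    using component_antisym[OF a c] by simp
qed

definition gjoin :: "'a \<Rightarrow> 'a \<Rightarrow> 'a" where
  "gjoin a b = join (sup (index a) (index b))
     (lift (index a) (sup (index a) (index b)) a) (lift (index b) (sup (index a) (index b)) b)"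

lemma gjoin_mem: "a \<in> L x \<Longrightarrow> b \<in> L y \<Longrightarrow> gjoin a b \<in> L (sup (index a) (index b))"
  unfolding gjoin_def using join_closed lift_mem mem_index by simp

lemma is_join_gjoin:
  assumes a: "a \<in> L xa" and b: "b \<in> L xb"
  shows "is_join carrier gle a b (gjoin a b)"
  unfolding is_join_def
proof (intro conjI ballI impI)
  let ?na = "index a" and ?nb = "index b"
  let ?z = "sup ?na ?nb"
  have an: "a \<in> L ?na" and bn: "b \<in> L ?nb"
    using mem_index a b by blast+
  have az: "?na \<le> ?z" and bz: "?nb \<le> ?z"
    by simp_all
  note la = lift_mem[OF az an] and lb = lift_mem[OF bz bn]
  have jz: "gjoin a b \<in> L ?z"
    using gjoin_mem[OF a b] .
  show "gjoin a b \<in> carrier"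
    using jz mem_carrier_iff by blast
  show "gle a (gjoin a b)" "gle b (gjoin a b)"
    using gle_if_lift_le[OF an jz az] gle_if_lift_le[OF bn jz bz] join_upper1[OF la lb]
      join_upper2[OF la lb] unfolding gjoin_def by simp_all
  fix d assume d: "d \<in> carrier" "gle a d \<and> gle b d"
  let ?nd = "index d"
  have dn: "d \<in> L ?nd"
    using d(1) mem_index mem_carrier_iff by blast
  have ra: "?na \<le> ?nd" "le ?nd (lift ?na ?nd a) d"
    and rb: "?nb \<le> ?nd" "le ?nd (lift ?nb ?nd b) d"
    using d(2) lifted_le_if_gle unfolding lifted_le_def by blast+
  have zd: "?z \<le> ?nd"
    using ra(1) rb(1) by simp
  have "lift ?z ?nd (gjoin a b) = join ?nd (lift ?na ?nd a) (lift ?nb ?nd b)"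
    unfolding gjoin_def using lift_join[OF zd la lb] lift_trans[OF az zd an] lift_trans[OF bz zd bn] by simp
  then have "le ?nd (lift ?z ?nd (gjoin a b)) d"
    using join_least[OF lift_mem[OF ra(1) an] lift_mem[OF rb(1) bn] dn ra(2) rb(2)] by simp
  then show "gle (gjoin a b) d"
    using gle_if_lift_le[OF jz dn zd] by simp
qed

lemma ljoin_glued: "a \<in> L xa \<Longrightarrow> b \<in> L xb \<Longrightarrow> ljoin carrier gle a b = gjoin a b"
  using ljoin_eqI[OF gle_antisym is_join_gjoin] by blast

end

section \<open>Gluing homomorphisms\<close>

definition glued_map :: "('i \<Rightarrow> 'a set) \<Rightarrow> ('i \<Rightarrow> 'a \<Rightarrow> 'b) \<Rightarrow> 'a \<Rightarrow> 'b" where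
  "glued_map L \<phi> a = \<phi> (SOME x. a \<in> L x) a"

locale glued_hom = glued_sum L le for L :: "'i::lattice \<Rightarrow> 'a set" and le +
  fixes \<phi> :: "'i \<Rightarrow> 'a \<Rightarrow> 'b::lattice"
  assumes hom: "\<And>x. lattice_hom (L x) (le x) (\<phi> x)"
    and agree: "\<And>x y a. x \<prec> y \<Longrightarrow> a \<in> L x \<inter> L y \<Longrightarrow> \<phi> x a = \<phi> y a"
begin

lemma phi_join: "a \<in> L x \<Longrightarrow> b \<in> L x \<Longrightarrow> \<phi> x (join x a b) = sup (\<phi> x a) (\<phi> x b)"
  using hom[of x] unfolding lattice_hom_def by blast

lemma phi_mono:
  assumes "a \<in> L x" "b \<in> L x" "le x a b"
  shows "\<phi> x a \<le> \<phi> x b"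
  using phi_join[OF assms(1,2)] join_absorb2[OF assms] by (simp add: le_iff_sup)

lemma phi_eq_if_le:
  assumes "x \<le> w" "a \<in> L x" "a \<in> L w"
  shows "\<phi> w a = \<phi> x a"
proof -
  have "lifts_to x w a r \<Longrightarrow> a \<in> L x \<Longrightarrow> a \<in> L w \<Longrightarrow> \<phi> w a = \<phi> x a" for r
  proof (induction rule: lifts_to.induct)
    case (lifts_to_step x y w a r)
    have xy: "x \<le> y"
      using covers_imp_le[OF lifts_to_step.hyps(1)] .
    have ay: "a \<in> L y"
      using convex[OF xy lifts_to_step.hyps(2) lifts_to_step.prems] .
    then have "join x a (zero y) = a"
      using join_absorb1[OF lifts_to_step.prems(1) cover_step(1)[OF lifts_to_step.hyps(1) lifts_to_step.prems(1)]]
        zero_le_iff_mem[OF xy lifts_to_step.prems(1) ay lifts_to_step.prems(1)] by simp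
    then have "\<phi> w a = \<phi> y a"
      using lifts_to_step.IH ay lifts_to_step.prems(2) by simp
    also have "\<dots> = \<phi> x a"
      using agree[OF lifts_to_step.hyps(1)] ay lifts_to_step.prems(1) by simp
    finally show ?case .
  qed simp
  then show ?thesis
    using lifts_to_lift[OF assms(1,2)] assms(2,3) .
qed

lemma phi_agree: "a \<in> L x \<Longrightarrow> a \<in> L y \<Longrightarrow> \<phi> x a = \<phi> y a"
  using phi_eq_if_le[of "inf x y" x a] phi_eq_if_le[of "inf x y" y a] mem_inf by simp

lemma glued_map_eq: "a \<in> L x \<Longrightarrow> glued_map L \<phi> a = \<phi> x a"
  unfolding glued_map_def by (metis phi_agree someI)

lemma phi_lifts_to_mono: "lifts_to x w a r \<Longrightarrow> a \<in> L x \<Longrightarrow> \<phi> x a \<le> \<phi> w r"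
proof (induction rule: lifts_to.induct)
  case (lifts_to_step x y w a r)
  note s = cover_step[OF lifts_to_step.hyps(1) lifts_to_step.prems(1)]
  have "\<phi> x a \<le> \<phi> x (join x a (zero y))"
    using phi_mono[OF lifts_to_step.prems(1) s(2) join_upper1[OF lifts_to_step.prems(1) s(1)]] .
  also have "\<dots> = \<phi> y (join x a (zero y))"
    using phi_agree[OF s(2,3)] .
  also have "\<dots> \<le> \<phi> w r"
    using lifts_to_step.IH[OF s(3)] .
  finally show ?case .
qed simp

lemma phi_zero_mono: "x \<le> w \<Longrightarrow> \<phi> x (zero x) \<le> \<phi> w (zero w)"
  using phi_lifts_to_mono[OF lifts_to_lift[OF _ zero_in] zero_in] lift_zero by metis

lemma phi_lifts_to: "lifts_to x w a r \<Longrightarrow> a \<in> L x \<Longrightarrow> \<phi> w r = sup (\<phi> x a) (\<phi> w (zero w))"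
proof (induction rule: lifts_to.induct)
  case (lifts_to_refl w a)
  then show ?case
    using phi_mono[OF zero_in lifts_to_refl zero_le[OF lifts_to_refl]] by (simp add: sup.absorb1)
next
  case (lifts_to_step x y w a r)
  note s = cover_step[OF lifts_to_step.hyps(1) lifts_to_step.prems(1)]
  have "\<phi> y (join x a (zero y)) = sup (\<phi> x a) (\<phi> y (zero y))"
    using phi_agree[OF s(2,3)] phi_join[OF lifts_to_step.prems(1) s(1)] phi_agree[OF s(1) zero_in] by simp
  then show ?case
    using lifts_to_step.IH[OF s(3)] phi_zero_mono[OF lifts_to_step.hyps(2)]
    by (simp add: sup.assoc sup.absorb2)
qed

lemma phi_lift: "x \<le> w \<Longrightarrow> a \<in> L x \<Longrightarrow> \<phi> w (lift x w a) = sup (\<phi> x a) (\<phi> w (zero w))"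
  using phi_lifts_to lifts_to_lift by blast

lemma glued_map_gjoin:
  assumes zero_sup: "\<And>x y. \<phi> (sup x y) (zero (sup x y)) \<le> sup (\<phi> x (zero x)) (\<phi> y (zero y))"
    and a: "a \<in> L xa" and b: "b \<in> L xb"
  shows "glued_map L \<phi> (gjoin a b) = sup (glued_map L \<phi> a) (glued_map L \<phi> b)"
proof -
  let ?na = "index a" and ?nb = "index b"
  let ?z = "sup ?na ?nb"
  have an: "a \<in> L ?na" and bn: "b \<in> L ?nb"
    using mem_index a b by blast+
  have az: "?na \<le> ?z" and bz: "?nb \<le> ?z"
    by simp_all
  let ?P = "\<phi> ?na a" and ?Q = "\<phi> ?nb b" and ?B = "\<phi> ?z (zero ?z)"
  text \<open>The new bottom is absorbed: \<open>\<phi>(0\<^sub>z) \<le> \<phi>(0\<^bsub>na\<^esub>) \<squnion> \<phi>(0\<^bsub>nb\<^esub>) \<le> \<phi> a \<squnion> \<phi> b\<close>.\<close>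
  have "?B \<le> sup ?P ?Q"
    using order_trans[OF zero_sup sup_mono[OF phi_mono[OF zero_in an zero_le[OF an]]
          phi_mono[OF zero_in bn zero_le[OF bn]]]] .
  then have "sup (sup ?P ?B) (sup ?Q ?B) = sup ?P ?Q"
    by (intro order_antisym) (simp_all add: le_supI1 le_supI2)
  moreover have "glued_map L \<phi> (gjoin a b) = sup (sup ?P ?B) (sup ?Q ?B)"
    using glued_map_eq[OF gjoin_mem[OF a b]] phi_join[OF lift_mem[OF az an] lift_mem[OF bz bn]]
      phi_lift[OF az an] phi_lift[OF bz bn]
    unfolding gjoin_def by simp
  ultimately show ?thesis
    using glued_map_eq[OF an] glued_map_eq[OF bn] by simp
qed

lemma glued_map_join:
  assumes "\<And>x y. \<phi> (sup x y) (zero (sup x y)) \<le> sup (\<phi> x (zero x)) (\<phi> y (zero y))"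
    and "a \<in> carrier" "b \<in> carrier"
  shows "glued_map L \<phi> (ljoin carrier gle a b) = sup (glued_map L \<phi> a) (glued_map L \<phi> b)"
  using assms ljoin_glued glued_map_gjoin unfolding mem_carrier_iff by metis

lemma glued_map_mono: "gle a b \<Longrightarrow> glued_map L \<phi> a \<le> glued_map L \<phi> b"
  unfolding glued_le_def
proof (induction rule: tranclp_induct)
  case (base b)
  then show ?case
    using glued_map_eq phi_mono by auto
next
  case (step b c)
  then show ?case
    using glued_map_eq phi_mono order_trans by fastforce
qed

lemma eq_if_gle_glued_map_eq:
  assumes inj: "\<And>x. inj_on (\<phi> x) (L x)"
  shows "gle a c \<Longrightarrow> glued_map L \<phi> a = glued_map L \<phi> c \<Longrightarrow> a = c"
  unfolding glued_le_def
proof (induction rule: tranclp_induct)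
  case (base c)
  then show ?case
    using inj glued_map_eq unfolding inj_on_def by auto
next
  case (step b c)
  then obtain x where x: "b \<in> L x" "c \<in> L x" "le x b c"
    by blast
  have "glued_map L \<phi> a \<le> glued_map L \<phi> b" "glued_map L \<phi> b \<le> glued_map L \<phi> c"
    using glued_map_mono step(1) gle_if_le[OF x] unfolding glued_le_def by blast+
  then have "glued_map L \<phi> a = glued_map L \<phi> b" "glued_map L \<phi> b = glued_map L \<phi> c"
    using step(4) by (simp_all add: order_antisym)
  then show ?case
    using step(3) inj x glued_map_eq unfolding inj_on_def by auto
qed

lemma glued_map_inj_on:
  assumes zero_sup: "\<And>x y. \<phi> (sup x y) (zero (sup x y)) \<le> sup (\<phi> x (zero x)) (\<phi> y (zero y))"
    and inj: "\<And>x. inj_on (\<phi> x) (L x)"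
  shows "inj_on (glued_map L \<phi>) carrier"
proof (rule inj_onI)
  fix a b assume "a \<in> carrier" "b \<in> carrier" and eq: "glued_map L \<phi> a = glued_map L \<phi> b"
  then obtain xa xb where a: "a \<in> L xa" and b: "b \<in> L xb"
    unfolding mem_carrier_iff by blast
  have "gle a (gjoin a b)" "gle b (gjoin a b)"
    using is_join_gjoin[OF a b] unfolding is_join_def by blast+
  moreover have "glued_map L \<phi> (gjoin a b) = glued_map L \<phi> a"
    "glued_map L \<phi> (gjoin a b) = glued_map L \<phi> b"
    using glued_map_gjoin[OF zero_sup a b] eq by simp_all
  ultimately show "a = b"
    using eq_if_gle_glued_map_eq[OF inj] by metis
qed

end

section \<open>Modular index lattices\<close>

lemma modular_covers_sup:
  assumes modular: "modular_lattice TYPE('i::lattice)" and cover: "inf a b \<prec> (b::'i)"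
  shows "a \<prec> sup a b"
  unfolding covers_def
proof (intro conjI notI)
  have "inf a b < b"
    using cover by (rule covers_imp_less)
  then show "a < sup a b"
    by (metis inf.absorb_iff2 le_sup_iff less_le order_refl sup.absorb1)
  assume "\<exists>m. a < m \<and> m < sup a b"
  then obtain m where am: "a < m" and mab: "m < sup a b"
    by blast
  text \<open>By modularity \<open>m = a \<squnion> (b \<sqinter> m)\<close>, and \<open>b \<sqinter> m\<close> lies between \<open>a \<sqinter> b\<close> and its cover \<open>b\<close>.\<close>
  have m: "sup a (inf b m) = m"
    using modular am mab unfolding modular_lattice_def by (simp add: inf.absorb2 less_imp_le)
  have "inf b m = inf a b \<or> inf b m = b"
  proof (rule ccontr)
    assume "\<not> ?thesis"
    moreover have "inf a b \<le> inf b m" "inf b m \<le> b"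
      using am by (auto intro: le_infI less_imp_le inf.coboundedI1)
    ultimately have "inf a b < inf b m" "inf b m < b"
      by (auto simp: less_le)
    then show False
      using cover unfolding covers_def by blast
  qed
  then show False
    using m am mab by (auto simp: inf_commute)
qed

lemma modular_cover_square:
  assumes modular: "modular_lattice TYPE('i::lattice)"
    and xx': "x \<prec> x'" and c': "x \<le> c'" "c' \<prec> (c::'i)" and inf_eq: "inf x' c = x"
  shows "inf x' c' = x" and "c' \<prec> sup x' c'" and "c \<prec> sup x' c" and "sup x' c' \<prec> sup x' c"
    and "inf c (sup x' c') = c'" and "sup c (sup x' c') = sup x' c"
proof -
  have c'c: "c' \<le> c"
    using covers_imp_le[OF c'(2)] .
  show ic': "inf x' c' = x"
  proof (rule order_antisym)
    show "inf x' c' \<le> x"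
      using inf_mono[OF order_refl c'c, of x'] inf_eq by simp
    show "x \<le> inf x' c'"
      using covers_imp_le[OF xx'] c'(1) by simp
  qed
  show cd': "c' \<prec> sup x' c'"
    using modular_covers_sup[OF modular, of c' x'] ic' xx' by (simp add: inf_commute sup_commute)
  show icd: "inf c (sup x' c') = c'"
    using modular c'c inf_eq c'(1) unfolding modular_lattice_def
    by (metis inf_commute sup_commute sup.absorb1)
  show scd: "sup c (sup x' c') = sup x' c"
    using c'c by (metis sup.absorb2 sup_left_commute sup_commute)
  show "c \<prec> sup x' c" "sup x' c' \<prec> sup x' c"
    using modular_covers_sup[OF modular, of c "sup x' c'"]
      modular_covers_sup[OF modular, of "sup x' c'" c] icd cd' scd c'(2)
    by (simp_all add: inf_commute sup_commute)
qed

lemma lower_cover_inf_eq: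
  assumes "x0 \<prec> x" "x0 \<le> c" "\<not> x \<le> (c::'i::lattice)"
  shows "inf x c = x0"
proof (rule ccontr)
  assume "inf x c \<noteq> x0"
  moreover have "x0 \<le> inf x c"
    using assms(2) covers_imp_le[OF assms(1)] by simp
  ultimately have "x0 < inf x c"
    by (simp add: less_le)
  moreover have "inf x c < x"
    using assms(3) by (metis inf.absorb_iff1 inf_le1 order.not_eq_order_implies_strict)
  ultimately show False
    using assms(1) unfolding covers_def by blast
qed

context glued_hom
begin

lemma phi_zero_square:
  assumes p1: "p \<prec> q1" and p2: "p \<prec> q2" and r1: "q1 \<prec> r" and r2: "q2 \<prec> r"
    and inf: "inf q1 q2 = p" and sup: "sup q1 q2 = r"
  shows "\<phi> r (zero r) \<le> sup (\<phi> q1 (zero q1)) (\<phi> q2 (zero q2))"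
proof -
  have zero_r: "zero r \<in> L p" "zero r \<in> L q1"
    using mem_inf[OF cover_step(1)[OF r1 zero_in] cover_step(1)[OF r2 zero_in]] inf
      cover_step(1)[OF r1 zero_in] by simp_all
  have z1: "zero q1 \<in> L p" and z2: "zero q2 \<in> L p"
    using cover_step(1)[OF p1 zero_in] cover_step(1)[OF p2 zero_in] .
  let ?e = "join p (zero q1) (zero q2)"
  have ep: "?e \<in> L p"
    using join_closed[OF z1 z2] .
  have e1: "?e \<in> L q1" and e2: "?e \<in> L q2"
    using overlap_up_closed[OF covers_imp_le[OF p1] z1 zero_in z1 ep zero_in join_upper1[OF z1 z2]]
      overlap_up_closed[OF covers_imp_le[OF p2] z2 zero_in z2 ep zero_in join_upper2[OF z1 z2]] .
  have "?e \<in> L r"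
    using mem_sup[OF e1 e2] sup by simp
  text \<open>\<open>0\<^sub>r \<le> 0\<^bsub>q1\<^esub> +\<^sub>p 0\<^bsub>q2\<^esub>\<close> holds in \<open>L r\<close>, hence in \<open>L q1\<close> and in \<open>L p\<close>.\<close>
  then have "le q1 (zero r) ?e"
    using overlap_le_iff[OF covers_imp_le[OF r1] zero_r(2) zero_in e1] zero_le by blast
  then have le: "le p (zero r) ?e"
    using overlap_le_iff[OF covers_imp_le[OF p1] zero_r ep e1] by simp
  have "\<phi> r (zero r) = \<phi> p (zero r)"
    using phi_agree[OF zero_in zero_r(1)] .
  also have "\<dots> \<le> \<phi> p ?e"
    using phi_mono[OF zero_r(1) ep le] .
  also have "\<dots> = sup (\<phi> q1 (zero q1)) (\<phi> q2 (zero q2))"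
    using phi_join[OF z1 z2] phi_agree[OF z1 zero_in] phi_agree[OF z2 zero_in] by simp
  finally show ?thesis .
qed

lemma phi_zero_sup_le_cover:
  assumes modular: "modular_lattice TYPE('i)"
  shows "x \<prec> x' \<Longrightarrow> x \<le> c \<Longrightarrow> inf x' c = x \<Longrightarrow>
    \<phi> (sup x' c) (zero (sup x' c)) \<le> sup (\<phi> x' (zero x')) (\<phi> c (zero c))"
proof (induction c rule: wf_induct_rule[OF fin_length_type_wf(1)[OF fin_length]])
  case (1 c)
  show ?case
  proof (cases "c = x")
    case True
    then show ?thesis
      using covers_imp_le[OF "1.prems"(1)] by (simp add: sup.absorb1)
  next
    case False
    then obtain c' where c': "x \<le> c'" "c' \<prec> c"
      using exists_lower_cover[OF fin_length] "1.prems"(2) by force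
    note square = modular_cover_square[OF modular "1.prems"(1) c' "1.prems"(3)]
    have "\<phi> (sup x' c) (zero (sup x' c)) \<le> sup (\<phi> c (zero c)) (\<phi> (sup x' c') (zero (sup x' c')))"
      using phi_zero_square[OF c'(2) square(2,3,4,5,6)] .
    also have "\<dots> \<le> sup (\<phi> c (zero c)) (sup (\<phi> x' (zero x')) (\<phi> c' (zero c')))"
      using "1.IH"[of c'] covers_imp_less[OF c'(2)] "1.prems"(1) c'(1) square(1)
      by (simp add: le_supI2)
    also have "\<dots> \<le> sup (\<phi> x' (zero x')) (\<phi> c (zero c))"
      using phi_zero_mono[OF covers_imp_le[OF c'(2)]] by (simp add: le_supI1 le_supI2)
    finally show ?thesis .
  qed
qed

lemma phi_zero_sup_le:
  assumes modular: "modular_lattice TYPE('i)"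
  shows "\<phi> (sup x y) (zero (sup x y)) \<le> sup (\<phi> x (zero x)) (\<phi> y (zero y))"
proof (induction x arbitrary: y rule: wf_induct_rule[OF fin_length_type_wf(1)[OF fin_length]])
  case (1 x)
  show ?case
  proof (cases "x \<le> y")
    case True
    then show ?thesis
      by (simp add: sup.absorb2)
  next
    case False
    text \<open>Take a lower cover \<open>x\<^sub>0 \<prec> x\<close> above \<open>x \<sqinter> y\<close> and put \<open>c = x\<^sub>0 \<squnion> y\<close>.\<close>
    then have "inf x y < x"
      by (metis inf.absorb_iff1 inf_le1 order.not_eq_order_implies_strict)
    then obtain x0 where x0: "inf x y \<le> x0" "x0 \<prec> x"
      using exists_lower_cover[OF fin_length] by blast
    have x0x: "x0 \<le> x"
      using covers_imp_le[OF x0(2)] .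
    let ?c = "sup x0 y"
    have IH: "\<phi> ?c (zero ?c) \<le> sup (\<phi> x0 (zero x0)) (\<phi> y (zero y))"
      using "1.IH" covers_imp_less[OF x0(2)] by simp
    have mono: "\<phi> x0 (zero x0) \<le> \<phi> x (zero x)"
      using phi_zero_mono[OF x0x] .
    show ?thesis
    proof (cases "x \<le> ?c")
      case True
      then have "sup x y = ?c"
        using x0x by (intro order_antisym) (simp_all add: le_supI1)
      then show ?thesis
        using order_trans[OF IH sup_mono[OF mono order_refl]] by simp
    next
      case False
      have "inf x ?c = x0"
        using lower_cover_inf_eq[OF x0(2) sup_ge1 False] .
      moreover have "sup x ?c = sup x y"
        using x0x by (metis sup.absorb1 sup_assoc)
      ultimately have "\<phi> (sup x y) (zero (sup x y)) \<le> sup (\<phi> x (zero x)) (\<phi> ?c (zero ?c))"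
        using phi_zero_sup_le_cover[OF modular x0(2) sup_ge1[of x0 y]] by simp
      also have "\<dots> \<le> sup (\<phi> x (zero x)) (\<phi> y (zero y))"
        using order_trans[OF IH sup_mono[OF mono order_refl]] by simp
      finally show ?thesis .
    qed
  qed
qed

end

section \<open>Duality\<close>

lemma fin_length_type_dual:
  assumes "fin_length_type TYPE('i::order)"
  shows "fin_length_type TYPE('i dual)"
  unfolding fin_length_type_def
proof (intro allI impI)
  fix C :: "'i dual set"
  assume "Complete_Partial_Order.chain (\<le>) C"
  then have "Complete_Partial_Order.chain (\<le>) (undual ` C)"
    unfolding Complete_Partial_Order.chain_def dual_less_eq_iff by blast
  then have "finite (undual ` C)"
    using assms unfolding fin_length_type_def by blast
  then show "finite C"
    using finite_imageD inj_on_subset[OF inj_undual] by blast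
qed

lemma covers_dual: "(x::'i::order dual) \<prec> y \<longleftrightarrow> undual y \<prec> undual x"
  unfolding covers_def dual_less_iff by (metis undual_dual)

lemma modular_dual:
  assumes "modular_lattice TYPE('i::lattice)"
  shows "modular_lattice TYPE('i dual)"
  unfolding modular_lattice_def
proof (intro allI impI)
  fix x y z :: "'i dual"
  assume "x \<le> z"
  then have "sup (undual z) (inf (undual y) (undual x)) = inf (sup (undual z) (undual y)) (undual x)"
    using assms unfolding modular_lattice_def dual_less_eq_iff by blast
  then show "sup x (inf y z) = inf (sup x y) z"
    by (simp add: dual_eq_iff inf_commute sup_commute)
qed

lemma lattice_hom_dual:
  "lattice_hom A le f \<Longrightarrow> lattice_hom A le\<inverse>\<inverse> (\<lambda>a. dual (f a))"
  unfolding lattice_hom_def ljoin_conversep lmeet_conversep by simp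

lemma glued_carrier_dual: "glued_carrier (\<lambda>x::'i dual. L (undual x)) = glued_carrier L"
  unfolding glued_carrier_def by (metis image_image surj_undual)

lemma glued_le_dual:
  "glued_le (\<lambda>x::'i dual. L (undual x)) (\<lambda>x. (le (undual x))\<inverse>\<inverse>) = (glued_le L le)\<inverse>\<inverse>"
proof -
  have "(\<lambda>a b. \<exists>x::'i dual. a \<in> L (undual x) \<and> b \<in> L (undual x) \<and> (le (undual x))\<inverse>\<inverse> a b)
      = (\<lambda>a b. \<exists>x. a \<in> L x \<and> b \<in> L x \<and> le x a b)\<inverse>\<inverse>"
  proof (intro ext iffI)
    fix a b
    assume "(\<lambda>a b. \<exists>x. a \<in> L x \<and> b \<in> L x \<and> le x a b)\<inverse>\<inverse> a b"
    then obtain x where "a \<in> L x" "b \<in> L x" "le x b a"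
      by auto
    then show "\<exists>x::'i dual. a \<in> L (undual x) \<and> b \<in> L (undual x) \<and> (le (undual x))\<inverse>\<inverse> a b"
      by (intro exI[of _ "dual x"]) simp
  qed auto
  then show ?thesis
    unfolding glued_le_def by (simp add: tranclp_converse)
qed

lemma glued_sum_dual:
  assumes "glued_sum L le"
  shows "glued_sum (\<lambda>x::'i::lattice dual. L (undual x)) (\<lambda>x. (le (undual x))\<inverse>\<inverse>)"
proof -
  interpret glued_sum L le
    by (fact assms)
  have components: "\<forall>x::'i dual. fin_length_lattice (L (undual x)) (le (undual x))\<inverse>\<inverse>"
    using component_fin_length fin_length_lattice_conversep by blast
  have overlaps: "\<forall>x y::'i dual. x \<le> y \<and> L (undual x) \<inter> L (undual y) \<noteq> {} \<longrightarrow>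
      is_filter (L (undual x)) (le (undual x))\<inverse>\<inverse> (L (undual x) \<inter> L (undual y)) \<and>
      is_ideal (L (undual y)) (le (undual y))\<inverse>\<inverse> (L (undual x) \<inter> L (undual y))"
    unfolding is_filter_conversep is_ideal_conversep dual_less_eq_iff
  proof (intro allI impI, elim conjE)
    fix x y :: "'i dual"
    assume "undual y \<le> undual x" "L (undual x) \<inter> L (undual y) \<noteq> {}"
    then show "is_ideal (L (undual x)) (le (undual x)) (L (undual x) \<inter> L (undual y)) \<and>
        is_filter (L (undual y)) (le (undual y)) (L (undual x) \<inter> L (undual y))"
      using overlap_filter_ideal[of "undual y" "undual x"] by (simp add: Int_commute)
  qed
  have orders: "\<forall>x y::'i dual. x \<le> y \<and> L (undual x) \<inter> L (undual y) \<noteq> {} \<longrightarrow>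
      (\<forall>a\<in>L (undual x) \<inter> L (undual y). \<forall>b\<in>L (undual x) \<inter> L (undual y).
        (le (undual x))\<inverse>\<inverse> a b \<longleftrightarrow> (le (undual y))\<inverse>\<inverse> a b)"
    unfolding dual_less_eq_iff
  proof (intro allI impI, elim conjE)
    fix x y :: "'i dual"
    assume "undual y \<le> undual x" "L (undual x) \<inter> L (undual y) \<noteq> {}"
    then show "\<forall>a\<in>L (undual x) \<inter> L (undual y). \<forall>b\<in>L (undual x) \<inter> L (undual y).
        (le (undual x))\<inverse>\<inverse> a b \<longleftrightarrow> (le (undual y))\<inverse>\<inverse> a b"
      using overlap_order_agree[of "undual y" "undual x"] by (simp add: Int_commute)
  qed
  have covers: "\<forall>x y::'i dual. x \<prec> y \<longrightarrow> L (undual x) \<inter> L (undual y) \<noteq> {}"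
    using covers_overlap_nonempty unfolding covers_dual by blast
  have inf_sup: "\<forall>x y::'i dual. L (undual x) \<inter> L (undual y) \<subseteq> L (undual (inf x y)) \<inter> L (undual (sup x y))"
    using overlap_subset by auto
  show ?thesis
    unfolding glued_sum_def glued_system_def
    using fin_length_type_dual[OF fin_length] components overlaps orders covers inf_sup by blast
qed

lemma glued_hom_dual:
  assumes "glued_hom L le \<phi>"
  shows "glued_hom (\<lambda>x::'i::lattice dual. L (undual x)) (\<lambda>x. (le (undual x))\<inverse>\<inverse>)
    (\<lambda>x a. dual (\<phi> (undual x) a))"
proof -
  interpret glued_hom L le \<phi>
    by (fact assms)
  show ?thesis
  proof (intro glued_hom.intro glued_hom_axioms.intro)
    show "glued_sum (\<lambda>x::'i dual. L (undual x)) (\<lambda>x. (le (undual x))\<inverse>\<inverse>)"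
      using glued_sum_axioms by (rule glued_sum_dual)
    show "lattice_hom (L (undual x)) (le (undual x))\<inverse>\<inverse> (\<lambda>a. dual (\<phi> (undual x) a))" for x :: "'i dual"
      using hom by (rule lattice_hom_dual)
    show "dual (\<phi> (undual x) a) = dual (\<phi> (undual y) a)"
      if "x \<prec> y" "a \<in> L (undual x) \<inter> L (undual y)" for x y :: "'i dual" and a
      using agree[of "undual y" "undual x" a] that unfolding covers_dual by auto
  qed
qed

context glued_hom
begin

lemma phi_one_inf_ge:
  assumes modular: "modular_lattice TYPE('i)"
  shows "inf (\<phi> x (one x)) (\<phi> y (one y)) \<le> \<phi> (inf x y) (one (inf x y))"
proof -
  interpret dual: glued_hom "\<lambda>x::'i dual. L (undual x)" "\<lambda>x. (le (undual x))\<inverse>\<inverse>"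
    "\<lambda>x a. dual (\<phi> (undual x) a)"
    using glued_hom_axioms by (rule glued_hom_dual)
  show ?thesis
    using dual.phi_zero_sup_le[OF modular_dual[OF modular], of "dual x" "dual y"]
    by (simp add: lbot_conversep flip: dual_inf_eq)
qed

lemma glued_map_meet:
  assumes one_inf: "\<And>x y. inf (\<phi> x (one x)) (\<phi> y (one y)) \<le> \<phi> (inf x y) (one (inf x y))"
    and "a \<in> carrier" "b \<in> carrier"
  shows "glued_map L \<phi> (lmeet carrier gle a b) = inf (glued_map L \<phi> a) (glued_map L \<phi> b)"
proof -
  interpret dual: glued_hom "\<lambda>x::'i dual. L (undual x)" "\<lambda>x. (le (undual x))\<inverse>\<inverse>"
    "\<lambda>x a. dual (\<phi> (undual x) a)"
    using glued_hom_axioms by (rule glued_hom_dual)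
  text \<open>The meet of the glued sum is the join of the glued sum of the order duals.\<close>
  have zero_sup: "\<And>x y. dual (\<phi> (undual (sup x y)) (dual.zero (sup x y)))
      \<le> sup (dual (\<phi> (undual x) (dual.zero x))) (dual (\<phi> (undual y) (dual.zero y)))"
    using one_inf by (simp add: lbot_conversep flip: dual_inf_eq)
  have dual_map: "glued_map (\<lambda>x. L (undual x)) (\<lambda>x a. dual (\<phi> (undual x) a)) c
      = dual (glued_map L \<phi> c)" if "c \<in> carrier" for c
  proof -
    obtain x where c: "c \<in> L x"
      using \<open>c \<in> carrier\<close> unfolding mem_carrier_iff by blast
    then have "c \<in> L (undual (dual x))"
      by simp
    then show ?thesis
      using dual.glued_map_eq[of c "dual x"] glued_map_eq[OF c] by simp
  qed
  obtain xa xb where "a \<in> L xa" "b \<in> L xb"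
    using assms(2,3) unfolding mem_carrier_iff by blast
  then have a: "a \<in> L (undual (dual xa))" and b: "b \<in> L (undual (dual xb))"
    by simp_all
  have "lmeet carrier gle a b = ljoin dual.carrier dual.gle a b"
    by (simp only: glued_carrier_dual glued_le_dual ljoin_conversep)
  also have "\<dots> = dual.gjoin a b"
    using dual.ljoin_glued[OF a b] .
  finally have meet: "lmeet carrier gle a b = dual.gjoin a b" .
  have "dual.gjoin a b \<in> carrier"
    using dual.gjoin_mem[OF a b] unfolding mem_carrier_iff by blast
  then have "dual (glued_map L \<phi> (lmeet carrier gle a b))
      = glued_map (\<lambda>x. L (undual x)) (\<lambda>x a. dual (\<phi> (undual x) a)) (dual.gjoin a b)"
    using dual_map meet by simp
  also have "\<dots> = dual (inf (glued_map L \<phi> a) (glued_map L \<phi> b))"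
    using dual.glued_map_gjoin[OF zero_sup a b] dual_map assms(2,3) by simp
  finally show ?thesis
    by (simp flip: dual_inf_eq)
qed

end

theorem theorem5p1:
  fixes L :: "'i::lattice \<Rightarrow> 'a set"
    and le :: "'i \<Rightarrow> 'a \<Rightarrow> 'a \<Rightarrow> bool"
    and \<phi> :: "'i \<Rightarrow> 'a \<Rightarrow> 'b::lattice"
  assumes S_fin: "fin_length_type TYPE('i)"
    and sys: "glued_system L le"
    and hom: "\<And>x. lattice_hom (L x) (le x) (\<phi> x)"
    and agree: "\<And>x y a. x \<prec> y \<Longrightarrow> a \<in> L x \<inter> L y \<Longrightarrow> \<phi> x a = \<phi> y a"
    and alt: "modular_lattice TYPE('i) \<or>
      (\<forall>x y. sup (\<phi> x (lbot (L x) (le x))) (\<phi> y (lbot (L y) (le y)))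
                = \<phi> (sup x y) (lbot (L (sup x y)) (le (sup x y))) \<and>
              inf (\<phi> x (ltop (L x) (le x))) (\<phi> y (ltop (L y) (le y)))
                = \<phi> (inf x y) (ltop (L (inf x y)) (le (inf x y))))"
  shows "\<exists>f. (\<forall>x. \<forall>a\<in>L x. f a = \<phi> x a) \<and>
             lattice_hom (glued_carrier L) (glued_le L le) f \<and>
             ((\<forall>x. inj_on (\<phi> x) (L x)) \<longrightarrow> inj_on f (glued_carrier L))"
proof -
  interpret glued_hom L le \<phi>
    using S_fin sys hom agree by (intro glued_hom.intro glued_sum.intro glued_hom_axioms.intro)
  have zero_sup: "\<phi> (sup x y) (zero (sup x y)) \<le> sup (\<phi> x (zero x)) (\<phi> y (zero y))" for x y
    using alt phi_zero_sup_le by (cases "modular_lattice TYPE('i)") simp_all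
  have one_inf: "inf (\<phi> x (one x)) (\<phi> y (one y)) \<le> \<phi> (inf x y) (one (inf x y))" for x y
    using alt phi_one_inf_ge by (cases "modular_lattice TYPE('i)") simp_all
  show ?thesis
  proof (intro exI conjI)
    show "\<forall>x. \<forall>a\<in>L x. glued_map L \<phi> a = \<phi> x a"
      using glued_map_eq by blast
    show "lattice_hom carrier gle (glued_map L \<phi>)"
      unfolding lattice_hom_def using glued_map_join[OF zero_sup] glued_map_meet[OF one_inf] by blast
    show "(\<forall>x. inj_on (\<phi> x) (L x)) \<longrightarrow> inj_on (glued_map L \<phi>) carrier"
      using glued_map_inj_on[OF zero_sup] by blast
  qed
qed

end
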